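(* Consider the infinite hydrodynamic chain $\partial_{t_2}u^i=\sum_{j\in\mathbb{Z}}A^i_j(\mathbf{u})\,\partial_xu^j$, $\mathbf{u}=(u^\ell)_{\ell\in\mathbb{Z}}$, given explicitly by (with $\partial=\partial_x$) $$\partial_{t_2}u^{-k}=\big(k\,u^{-(k+1)}-(k-2)u^{-(k-1)}+u^{-k}u^1\big)\partial u^0+u^0u^{-k}\partial u^1+u^0\big(\partial u^{-(k-1)}+\partial u^{-(k+1)}\big),\quad k>2,$$ $$\partial_{t_2}u^{-2}=\big(u^{-2}u^1+2u^{-3}\big)\partial u^0+u^0u^{-2}\partial u^1+u^0\partial u^{-3}+2u^0\partial u^{-1},$$ $$\partial_{t_2}u^{-1}=\big(u^{-1}u^1+u^{-2}\big)\partial u^0+u^0u^{-1}\partial u^1+u^0\partial u^{-2},$$ $$\partial_{t_2}u^0=u^0u^1\partial u^0+(u^0)^2\partial u^1,$$ $$\partial_{t_2}u^1=\big(2u^2-(u^1)^2\big)\partial u^0-u^0u^1\partial u^1+u^0\partial u^2,$$ $$\partial_{t_2}u^k=\big((k+1)u^{k+1}-(k-1)u^{k-1}-u^ku^1\big)\partial u^0-u^0u^k\partial u^1+u^0\big(\partial u^{k+1}+\partial u^{k-1}\big),\quad k>1.$$ Then the Haantjes tensor of the matrix $A(\mathbf{u})$ vanishes identically.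
   Context: For an infinite matrix $K(\mathbf{v})=(K^i_j(\mathbf{v}))_{i,j\in\mathbb{Z}}$ each of whose rows has finitely many nonzero entries, each depending on finitely many $v^\ell$, the Nijenhuis tensor is $\mathcal N^i_{jk}=K^p_j\partial_pK^i_k-K^p_k\partial_pK^i_j-K^i_p(\partial_jK^p_k-\partial_kK^p_j)$ and the Haantjes tensor is $\mathcal H^i_{jk}=\mathcal N^i_{pr}K^p_jK^r_k-\mathcal N^p_{jr}K^i_pK^r_k-\mathcal N^p_{rk}K^i_pK^r_j+\mathcal N^p_{jk}K^i_rK^r_p$, where $\partial_\ell=\partial/\partial v^\ell$ and repeated indices are summed. *)

theory Defs
  imports "HOL-Analysis.Analysis"
begin

type_synonym point = "int \<Rightarrow> real"
text \<open>Infinite matrices depending on the point: K v i j = K^i_j(v).\<close>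
type_synonym imatrix = "point \<Rightarrow> int \<Rightarrow> int \<Rightarrow> real"

text \<open>Sum over Z of a finitely supported family (all sums in the tensors are finite).\<close>
definition zsum :: "(int \<Rightarrow> real) \<Rightarrow> real" where
  "zsum f = sum f {p. f p \<noteq> 0}"

definition pd :: "int \<Rightarrow> (point \<Rightarrow> real) \<Rightarrow> point \<Rightarrow> real" where
  "pd l F v = deriv (\<lambda>t. F (v(l := t))) (v l)"

definition nijenhuis :: "imatrix \<Rightarrow> point \<Rightarrow> int \<Rightarrow> int \<Rightarrow> int \<Rightarrow> real" where
  "nijenhuis K v i j k =
     zsum (\<lambda>p. K v p j * pd p (\<lambda>w. K w i k) v)
   - zsum (\<lambda>p. K v p k * pd p (\<lambda>w. K w i j) v)
   - zsum (\<lambda>p. K v i p * (pd j (\<lambda>w. K w p k) v - pd k (\<lambda>w. K w p j) v))"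

definition haantjes :: "imatrix \<Rightarrow> point \<Rightarrow> int \<Rightarrow> int \<Rightarrow> int \<Rightarrow> real" where
  "haantjes K v i j k =
     zsum (\<lambda>p. zsum (\<lambda>r. nijenhuis K v i p r * K v p j * K v r k))
   - zsum (\<lambda>p. zsum (\<lambda>r. nijenhuis K v p j r * K v i p * K v r k))
   - zsum (\<lambda>p. zsum (\<lambda>r. nijenhuis K v p r k * K v i p * K v r j))
   + zsum (\<lambda>p. zsum (\<lambda>r. nijenhuis K v p j k * K v i r * K v r p))"

text \<open>The matrix A(u) of the hydrodynamic chain: A u i j is the coefficient of
  \<partial>u^j in the equation for \<partial>_{t_2} u^i.\<close>
definition chainA :: imatrix where
  "chainA u i j =
    (if i < -2 then
        (if j = 0 then real_of_int (-i) * u (i - 1) - real_of_int (-i - 2) * u (i + 1) + u i * u 1 else 0)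
      + (if j = 1 then u 0 * u i else 0)
      + (if j = i + 1 then u 0 else 0)
      + (if j = i - 1 then u 0 else 0)
     else if i = -2 then
        (if j = 0 then u (-2) * u 1 + 2 * u (-3) else 0)
      + (if j = 1 then u 0 * u (-2) else 0)
      + (if j = -3 then u 0 else 0)
      + (if j = -1 then 2 * u 0 else 0)
     else if i = -1 then
        (if j = 0 then u (-1) * u 1 + u (-2) else 0)
      + (if j = 1 then u 0 * u (-1) else 0)
      + (if j = -2 then u 0 else 0)
     else if i = 0 then
        (if j = 0 then u 0 * u 1 else 0)
      + (if j = 1 then (u 0)^2 else 0)
     else if i = 1 then
        (if j = 0 then 2 * u 2 - (u 1)^2 else 0)
      + (if j = 1 then - (u 0 * u 1) else 0)
      + (if j = 2 then u 0 else 0)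
     else
        (if j = 0 then real_of_int (i + 1) * u (i + 1) - real_of_int (i - 1) * u (i - 1) - u i * u 1 else 0)
      + (if j = 1 then - (u 0 * u i) else 0)
      + (if j = i + 1 then u 0 else 0)
      + (if j = i - 1 then u 0 else 0))"

end

theory Submission
  imports Defs
begin

text \<open>The Nijenhuis tensor of \<open>A\<close> has the special form
  \<open>N(X,Y) = e\<^sup>0(X) P\<^sub>0 Y - e\<^sup>0(Y) P\<^sub>0 X + e\<^sup>1(X) P\<^sub>1 Y - e\<^sup>1(Y) P\<^sub>1 X\<close>
  with \<open>P\<^sub>0 = u\<^sup>1 A - 4 u\<^sup>0 I\<close> and \<open>P\<^sub>1 = u\<^sup>0 A\<close>.
  For a torsion \<open>\<alpha> \<and> P\<close> with \<open>P\<close> commuting with \<open>A\<close> the four terms of the Haantjes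
  tensor cancel identically, so the Haantjes tensor vanishes. The components \<open>N\<^sup>i\<^sub>j\<^sub>k\<close>
  with \<open>j, k \<notin> {0, 1}\<close> vanish because those columns of \<open>A\<close> depend on \<open>u\<^sup>0\<close> alone
  and vanish in row \<open>0\<close>; the remaining ones are a direct computation, and since every row
  of \<open>A\<close> has finite support all sums over \<open>\<int>\<close> reduce to finite ones.\<close>

definition kron :: "int \<Rightarrow> int \<Rightarrow> real" where
  "kron l m = (if l = m then 1 else 0)"

lemma zsum_eq_sum: "finite S \<Longrightarrow> (\<And>p. p \<notin> S \<Longrightarrow> f p = 0) \<Longrightarrow> zsum f = sum f S"
  unfolding zsum_def by (rule sum.mono_neutral_left) auto

lemma zsum_zsum_eq_sum_sum:
  assumes "finite U" and "\<And>p r. f p r \<noteq> 0 \<Longrightarrow> p \<in> U \<and> r \<in> U"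
  shows "zsum (\<lambda>p. zsum (f p)) = (\<Sum>p\<in>U. \<Sum>r\<in>U. f p r)"
proof -
  have "zsum (f p) = sum (f p) U" for p
    using assms by (intro zsum_eq_sum) auto
  then have "zsum (\<lambda>p. zsum (f p)) = zsum (\<lambda>p. sum (f p) U)"
    by simp
  also have "\<dots> = (\<Sum>p\<in>U. \<Sum>r\<in>U. f p r)"
    using assms by (intro zsum_eq_sum sum.neutral) auto
  finally show ?thesis .
qed

lemma zsum_uminus: "zsum (\<lambda>p. - f p) = - zsum f"
  unfolding zsum_def by (simp add: sum_negf)

lemma pd_eq_0_if_independent: "(\<And>t. F (v(l := t)) = F v) \<Longrightarrow> pd l F v = 0"
  unfolding pd_def by simp

lemma has_field_derivative_if_const:
  "(P \<Longrightarrow> (f has_field_derivative a) F) \<Longrightarrow> (\<not> P \<Longrightarrow> (g has_field_derivative b) F)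
   \<Longrightarrow> c = (if P then a else b) \<Longrightarrow> ((\<lambda>t. if P then f t else g t) has_field_derivative c) F"
  by (cases P) auto

lemma has_field_derivative_fun_upd_apply:
  "c = kron l m \<Longrightarrow> ((\<lambda>t. (v(l := t)) m) has_field_derivative c) (at x)"
  by (cases "m = l") (auto simp: kron_def intro!: derivative_eq_intros)

lemma nijenhuis_antisym: "nijenhuis K v i j k = - nijenhuis K v i k j"
proof -
  have "(\<lambda>p. K v i p * (pd j (\<lambda>w. K w p k) v - pd k (\<lambda>w. K w p j) v))
      = (\<lambda>p. - (K v i p * (pd k (\<lambda>w. K w p j) v - pd j (\<lambda>w. K w p k) v)))"
    by (simp add: algebra_simps)
  then show ?thesis
    unfolding nijenhuis_def by (simp add: zsum_uminus)
qed

definition haantjes_on ::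
  "int set \<Rightarrow> (int \<Rightarrow> int \<Rightarrow> real) \<Rightarrow> (int \<Rightarrow> int \<Rightarrow> int \<Rightarrow> real) \<Rightarrow> int \<Rightarrow> int \<Rightarrow> int \<Rightarrow> real"
where
  "haantjes_on U K N i j k =
     (\<Sum>p\<in>U. \<Sum>r\<in>U. N i p r * K p j * K r k)
   - (\<Sum>p\<in>U. \<Sum>r\<in>U. N p j r * K i p * K r k)
   - (\<Sum>p\<in>U. \<Sum>r\<in>U. N p r k * K i p * K r j)
   + (\<Sum>p\<in>U. \<Sum>r\<in>U. N p j k * K i r * K r p)"

lemma haantjes_eq_haantjes_on:
  fixes K :: imatrix and S :: "int \<Rightarrow> int set" and i j k :: int
  assumes finite: "\<And>a. finite (S a)" and self: "\<And>a. a \<in> S a"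
    and K_supp: "\<And>a c. c \<notin> S a \<Longrightarrow> K v a c = 0"
    and N_supp: "\<And>a b c. b \<notin> S a \<or> c \<notin> S a \<Longrightarrow> nijenhuis K v a b c = 0"
  defines "U \<equiv> \<Union> (S ` S i) \<union> {j, k}"
  shows "haantjes K v i j k = haantjes_on U (K v) (nijenhuis K v) i j k"
proof -
  have K_nz: "c \<in> S a" if "K v a c \<noteq> 0" for a c
    using K_supp that by blast
  have N_nz: "b \<in> S a \<and> c \<in> S a" if "nijenhuis K v a b c \<noteq> 0" for a b c
    using N_supp that by blast
  have "finite U"
    unfolding U_def using finite by simp
  moreover have S_sub: "S a \<subseteq> U" if "a \<in> S i" for a
    unfolding U_def using that by blast
  moreover have "i \<in> S i" "S i \<subseteq> U"
    using self S_sub by blast+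
  ultimately show ?thesis
    unfolding haantjes_def haantjes_on_def
    by (subst (1 2 3 4) zsum_zsum_eq_sum_sum[where U=U]; fastforce dest: K_nz N_nz)
qed

lemma haantjes_on_add:
  "haantjes_on U K (\<lambda>a b c. N a b c + M a b c) i j k = haantjes_on U K N i j k + haantjes_on U K M i j k"
  unfolding haantjes_on_def by (simp add: algebra_simps sum.distrib)

definition wedge_tensor :: "int \<Rightarrow> (int \<Rightarrow> int \<Rightarrow> real) \<Rightarrow> int \<Rightarrow> int \<Rightarrow> int \<Rightarrow> real" where
  "wedge_tensor b P a c d = (if c = b then P a d else 0) - (if d = b then P a c else 0)"

lemma haantjes_on_wedge_tensor:
  assumes U: "finite U" "b \<in> U" "i \<in> U" "j \<in> U" "k \<in> U"
    and commute: "\<And>a c. a \<in> U \<Longrightarrow> c \<in> U \<Longrightarrow> (\<Sum>r\<in>U. P a r * K r c) = (\<Sum>r\<in>U. K a r * P r c)"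
  shows "haantjes_on U K (wedge_tensor b P) i j k = 0"
proof -
  define PK where "PK a c = (\<Sum>r\<in>U. P a r * K r c)" for a c
  define KP where "KP a c = (\<Sum>r\<in>U. K a r * P r c)" for a c
  define KPK where "KPK a c = (\<Sum>r\<in>U. K a r * PK r c)" for a c
  define KKP where "KKP a c = (\<Sum>r\<in>U. K a r * KP r c)" for a c
  have if_zero:
    "\<And>P a b. (if P then a else 0) * b = (if P then a * b else (0::real))"
    "\<And>P a b. b * (if P then a else 0) = (if P then b * a else (0::real))"
    "\<And>P f. (\<Sum>r\<in>U. if P then f r else 0) = (if P then sum f U else (0::real))"
    by simp_all
  note sum_simps = algebra_simps if_zero sum.distrib sum_subtractf sum_distrib_left
  have "(\<Sum>p\<in>U. \<Sum>r\<in>U. wedge_tensor b P i p r * K p j * K r k) = K b j * PK i k - K b k * PK i j"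
    unfolding wedge_tensor_def PK_def using U by (simp add: sum_simps)
  moreover have "(\<Sum>p\<in>U. \<Sum>r\<in>U. wedge_tensor b P p j r * K i p * K r k)
      = (if j = b then KPK i k else 0) - K b k * KP i j"
    unfolding wedge_tensor_def KPK_def PK_def KP_def using U by (simp add: sum_simps)
  moreover have "(\<Sum>p\<in>U. \<Sum>r\<in>U. wedge_tensor b P p r k * K i p * K r j)
      = K b j * KP i k - (if k = b then KPK i j else 0)"
    unfolding wedge_tensor_def KPK_def PK_def KP_def using U by (simp add: sum_simps)
  moreover have "(\<Sum>p\<in>U. \<Sum>r\<in>U. wedge_tensor b P p j k * K i r * K r p)
      = (if j = b then KKP i k else 0) - (if k = b then KKP i j else 0)"
    unfolding wedge_tensor_def KKP_def KP_def using U by (subst sum.swap) (simp add: sum_simps)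
  moreover have "PK a c = KP a c" if "a \<in> U" "c \<in> U" for a c
    unfolding PK_def KP_def using that by (rule commute)
  moreover have "KPK a c = KKP a c" if "a \<in> U" "c \<in> U" for a c
    unfolding KPK_def KKP_def PK_def KP_def using that commute by simp
  ultimately show ?thesis
    unfolding haantjes_on_def using U by simp
qed

definition affine_op :: "real \<Rightarrow> real \<Rightarrow> (int \<Rightarrow> int \<Rightarrow> real) \<Rightarrow> int \<Rightarrow> int \<Rightarrow> real" where
  "affine_op x y K a c = x * K a c + y * kron a c"

lemma affine_op_commute:
  assumes "finite U" "a \<in> U" "c \<in> U"
  shows "(\<Sum>r\<in>U. affine_op x y K a r * K r c) = (\<Sum>r\<in>U. K a r * affine_op x y K r c)"
proof -
  have "(\<Sum>r\<in>U. affine_op x y K a r * K r c)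
      = (\<Sum>r\<in>U. x * (K a r * K r c)) + (\<Sum>r\<in>U. if r = a then y * K a c else 0)"
    unfolding affine_op_def kron_def by (auto simp: algebra_simps sum.distrib[symmetric] intro!: sum.cong)
  moreover have "(\<Sum>r\<in>U. K a r * affine_op x y K r c)
      = (\<Sum>r\<in>U. x * (K a r * K r c)) + (\<Sum>r\<in>U. if r = c then y * K a c else 0)"
    unfolding affine_op_def kron_def by (auto simp: algebra_simps sum.distrib[symmetric] intro!: sum.cong)
  ultimately show ?thesis
    using assms by simp
qed

definition chainA_support :: "int \<Rightarrow> int set" where
  "chainA_support a = {-3, -2, -1, 0, 1, 2, a - 1, a, a + 1}"

lemma chainA_eq_0: "c \<notin> chainA_support a \<Longrightarrow> chainA v a c = 0"
  unfolding chainA_support_def chainA_def by simp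

lemma chainA_fun_upd_eq:
  assumes "l \<notin> chainA_support a"
  shows "chainA (v(l := t)) a c = chainA v a c"
proof -
  have "(v(l := t)) m = v m" if "m \<in> chainA_support a" for m
    using assms that by auto
  then show ?thesis
    unfolding chainA_support_def chainA_def by (simp only: insert_iff simp_thms)
qed

definition chainA_deriv :: "point \<Rightarrow> int \<Rightarrow> int \<Rightarrow> int \<Rightarrow> real" where
  "chainA_deriv u i j l =
    (if i < -2 then
        (if j = 0 then of_int (-i) * kron l (i - 1) - of_int (-i - 2) * kron l (i + 1)
                       + (kron l i * u 1 + u i * kron l 1) else 0)
      + (if j = 1 then kron l 0 * u i + u 0 * kron l i else 0)
      + (if j = i + 1 then kron l 0 else 0) + (if j = i - 1 then kron l 0 else 0)
     else if i = -2 then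
        (if j = 0 then kron l (-2) * u 1 + u (-2) * kron l 1 + 2 * kron l (-3) else 0)
      + (if j = 1 then kron l 0 * u (-2) + u 0 * kron l (-2) else 0)
      + (if j = -3 then kron l 0 else 0) + (if j = -1 then 2 * kron l 0 else 0)
     else if i = -1 then
        (if j = 0 then kron l (-1) * u 1 + u (-1) * kron l 1 + kron l (-2) else 0)
      + (if j = 1 then kron l 0 * u (-1) + u 0 * kron l (-1) else 0)
      + (if j = -2 then kron l 0 else 0)
     else if i = 0 then
        (if j = 0 then kron l 0 * u 1 + u 0 * kron l 1 else 0)
      + (if j = 1 then 2 * u 0 * kron l 0 else 0)
     else if i = 1 then
        (if j = 0 then 2 * kron l 2 - 2 * u 1 * kron l 1 else 0)
      + (if j = 1 then - (kron l 0 * u 1 + u 0 * kron l 1) else 0)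
      + (if j = 2 then kron l 0 else 0)
     else
        (if j = 0 then of_int (i + 1) * kron l (i + 1) - of_int (i - 1) * kron l (i - 1)
                       - (kron l i * u 1 + u i * kron l 1) else 0)
      + (if j = 1 then - (kron l 0 * u i + u 0 * kron l i) else 0)
      + (if j = i + 1 then kron l 0 else 0) + (if j = i - 1 then kron l 0 else 0))"

lemma pd_chainA: "pd l (\<lambda>w. chainA w i j) v = chainA_deriv v i j l"
proof -
  have "((\<lambda>t. chainA (v(l := t)) i j) has_field_derivative chainA_deriv v i j l) (at (v l))"
    unfolding chainA_def
    by (rule has_field_derivative_if_const | rule derivative_eq_intros
        | rule has_field_derivative_fun_upd_apply | rule refl)+
       (auto simp: chainA_deriv_def kron_def)
  then show ?thesis
    unfolding pd_def by (rule DERIV_imp_deriv)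
qed

lemma chainA_deriv_eq_0: "l \<notin> chainA_support i \<Longrightarrow> chainA_deriv v i j l = 0"
  by (metis pd_chainA pd_eq_0_if_independent chainA_fun_upd_eq)

lemma chainA_deriv_column_eq_0:
  assumes "j \<noteq> 0" "j \<noteq> 1" "l \<noteq> 0"
  shows "chainA_deriv v i j l = 0"
proof -
  have "(v(l := t)) 0 = v 0" for t
    using assms(3) by simp
  then have "chainA (v(l := t)) i j = chainA v i j" for t
    unfolding chainA_def by (simp only: assms(1,2) if_False)
  then show ?thesis
    by (metis pd_chainA pd_eq_0_if_independent)
qed

lemma chainA_row_0: "j \<noteq> 0 \<Longrightarrow> j \<noteq> 1 \<Longrightarrow> chainA v 0 j = 0"
  unfolding chainA_def by simp

lemma nijenhuis_chainA_sum:
  "nijenhuis chainA v i j k =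
     (\<Sum>p\<in>chainA_support i. chainA v p j * chainA_deriv v i k p - chainA v p k * chainA_deriv v i j p
        - chainA v i p * (chainA_deriv v p k j - chainA_deriv v p j k))"
  unfolding nijenhuis_def
  by (subst (1 2 3) zsum_eq_sum[where S="chainA_support i"])
     (simp_all add: chainA_support_def pd_chainA chainA_deriv_eq_0 chainA_eq_0 sum_subtractf)

lemma nijenhuis_chainA_far:
  assumes "j \<notin> {0, 1}" "k \<notin> {0, 1}"
  shows "nijenhuis chainA v i j k = 0"
proof -
  have "chainA v p j * chainA_deriv v i k p - chainA v p k * chainA_deriv v i j p
        - chainA v i p * (chainA_deriv v p k j - chainA_deriv v p j k) = 0" for p
    using assms by (cases "p = 0") (simp_all add: chainA_row_0 chainA_deriv_column_eq_0)
  then show ?thesis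
    unfolding nijenhuis_chainA_sum by simp
qed

lemma nijenhuis_chainA_column_01:
  assumes "b = 0 \<or> b = 1"
  shows "nijenhuis chainA v a b c =
    wedge_tensor 0 (\<lambda>a c. v 1 * chainA v a c - 4 * v 0 * kron a c) a b c
    + wedge_tensor 1 (\<lambda>a c. v 0 * chainA v a c) a b c"
proof -
  \<comment> \<open>For \<open>a \<le> -7\<close> and \<open>a \<ge> 6\<close> the indices \<open>a - 2, \<dots>, a + 2\<close> stay clear of \<open>-4, \<dots>, 3\<close>,
    so the computation is uniform in \<open>a\<close>; the rows in between are computed one by one.\<close>
  have "a \<le> -7 \<or> 6 \<le> a \<or> a = -6 \<or> a = -5 \<or> a = -4 \<or> a = -3 \<or> a = -2 \<or> a = -1
      \<or> a = 0 \<or> a = 1 \<or> a = 2 \<or> a = 3 \<or> a = 4 \<or> a = 5"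
    by presburger
  with assms show ?thesis
    unfolding nijenhuis_chainA_sum chainA_support_def
    by (elim disjE;
        simp add: sum.insert_if;
        simp split del: if_split add: chainA_def chainA_deriv_def kron_def wedge_tensor_def;
        simp split: if_split add: kron_def chainA_def algebra_simps power2_eq_square)
qed

lemma nijenhuis_chainA:
  "nijenhuis chainA v = (\<lambda>a b c.
     wedge_tensor 0 (affine_op (v 1) (-4 * v 0) (chainA v)) a b c
     + wedge_tensor 1 (affine_op (v 0) 0 (chainA v)) a b c)"
proof (intro ext)
  fix a b c :: int
  consider "b = 0 \<or> b = 1" | "c = 0 \<or> c = 1" | "b \<notin> {0, 1}" "c \<notin> {0, 1}"
    by blast
  then show "nijenhuis chainA v a b c =
     wedge_tensor 0 (affine_op (v 1) (-4 * v 0) (chainA v)) a b c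
     + wedge_tensor 1 (affine_op (v 0) 0 (chainA v)) a b c"
  proof cases
    case 1
    then show ?thesis
      using nijenhuis_chainA_column_01[of b v a c] by (simp add: wedge_tensor_def affine_op_def)
  next
    case 2
    then show ?thesis
      using nijenhuis_antisym[of chainA v a b c] nijenhuis_chainA_column_01[of c v a b]
      by (simp add: wedge_tensor_def affine_op_def)
  next
    case 3
    then show ?thesis
      by (simp add: nijenhuis_chainA_far wedge_tensor_def)
  qed
qed

lemma nijenhuis_chainA_eq_0:
  assumes "b \<notin> chainA_support a \<or> c \<notin> chainA_support a"
  shows "nijenhuis chainA v a b c = 0"
proof -
  have "0 \<in> chainA_support a" "1 \<in> chainA_support a" "a \<in> chainA_support a"
    by (simp_all add: chainA_support_def)
  then show ?thesis
    using assms unfolding nijenhuis_chainA wedge_tensor_def affine_op_def kron_def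
    by (auto simp: chainA_eq_0)
qed

theorem proposition4p3:
  shows "\<forall>u i j k. haantjes chainA u i j k = 0"
proof (intro allI)
  fix u i j k
  let ?U = "\<Union> (chainA_support ` chainA_support i) \<union> {j, k}"
  have U: "finite ?U" "0 \<in> ?U" "1 \<in> ?U" "i \<in> ?U" "j \<in> ?U" "k \<in> ?U"
    by (auto simp: chainA_support_def)
  have "haantjes chainA u i j k = haantjes_on ?U (chainA u) (nijenhuis chainA u) i j k"
    by (rule haantjes_eq_haantjes_on)
       (simp_all add: chainA_support_def chainA_eq_0 nijenhuis_chainA_eq_0)
  also have "\<dots> = haantjes_on ?U (chainA u) (wedge_tensor 0 (affine_op (u 1) (-4 * u 0) (chainA u))) i j k
      + haantjes_on ?U (chainA u) (wedge_tensor 1 (affine_op (u 0) 0 (chainA u))) i j k"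
    unfolding nijenhuis_chainA by (rule haantjes_on_add)
  also have "\<dots> = 0"
  proof -
    have "haantjes_on ?U (chainA u) (wedge_tensor b (affine_op x y (chainA u))) i j k = 0"
      if "b \<in> ?U" for b x y
      using U(1) that U(4-6)
      by (rule haantjes_on_wedge_tensor) (blast intro: affine_op_commute[OF U(1)])
    then show ?thesis
      using U(2,3) by simp
  qed
  finally show "haantjes chainA u i j k = 0" .
qed

end
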